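(* Let $R$ be a finite local ring with maximal ideal $M$, and let $\chi,\eta$ be multiplicative characters of $R$. (i) Assume $\eta$ is primitive. If $\chi$ is neither trivial nor primitive, then $J(\chi,\eta)=0$; if $\chi$ is trivial and $R$ is not a field, then $J(\chi,\eta)=0$ as well. (ii) Assume $\chi$ and $\eta$ are primitive. If $R$ is not a field and $\chi\eta$ is neither trivial nor primitive, then $J(\chi,\eta)=0$. (iii) Assume $R$ admits a primitive additive character $\psi$ (with respect to which Gauss sums are taken). If $\chi\eta$ is primitive, then $G(\chi)G(\eta)=J(\chi,\eta)\,G(\chi\eta)$.
   Context: All rings are finite and commutative with identity; $R^\times$ is the unit group. A multiplicative character is a homomorphism $R^\times\to\mathbb{C}^*$; its conductor is $R$ if it is trivial, and otherwise the largest ideal $I\subseteq M$ such that it is identically $1$ on $1+I$; it is primitive if its conductor is $(0)$. An additive character $(R,+)\to\mathbb{C}^*$ is primitive if the only ideal on which it is identically $1$ is $(0)$. Gauss sum $G(\chi)=\sum_{u\in R^\times}\psi(u)\chi(u)$; Jacobi sum $J(\chi,\eta)=\sum_{u,v\in R^\times,\,u+v=1}\chi(u)\eta(v)$. *)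

theory Defs
  imports Complex_Main
begin

text \<open>Rings are the elements of a type of class comm_ring_1 that is finite.\<close>

definition ring_units :: "'a::comm_ring_1 set" where
  "ring_units = {u. u dvd 1}"

definition is_ideal :: "'a::comm_ring_1 set \<Rightarrow> bool" where
  "is_ideal I \<longleftrightarrow> 0 \<in> I \<and> (\<forall>x\<in>I. \<forall>y\<in>I. x + y \<in> I) \<and> (\<forall>r. \<forall>x\<in>I. r * x \<in> I)"

definition maximal_ideal :: "'a::comm_ring_1 set \<Rightarrow> bool" where
  "maximal_ideal M \<longleftrightarrow> is_ideal M \<and> M \<noteq> UNIV \<and>
     (\<forall>J. is_ideal J \<and> M \<subseteq> J \<longrightarrow> J = M \<or> J = UNIV)"

definition local_ring :: "'a::comm_ring_1 itself \<Rightarrow> bool" where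
  "local_ring _ \<longleftrightarrow> (\<exists>!M::'a set. maximal_ideal M)"

definition ring_is_field :: "'a::comm_ring_1 itself \<Rightarrow> bool" where
  "ring_is_field _ \<longleftrightarrow> (0::'a) \<noteq> 1 \<and> (\<forall>x::'a. x \<noteq> 0 \<longrightarrow> x dvd 1)"

text \<open>Multiplicative character: homomorphism from the unit group to C*
  (only its values on units matter).\<close>
definition mult_char :: "('a::comm_ring_1 \<Rightarrow> complex) \<Rightarrow> bool" where
  "mult_char \<chi> \<longleftrightarrow> (\<forall>u\<in>ring_units. \<forall>v\<in>ring_units. \<chi> (u * v) = \<chi> u * \<chi> v)
                   \<and> (\<forall>u\<in>ring_units. \<chi> u \<noteq> 0)"

definition trivial_char :: "('a::comm_ring_1 \<Rightarrow> complex) \<Rightarrow> bool" where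
  "trivial_char \<chi> \<longleftrightarrow> (\<forall>u\<in>ring_units. \<chi> u = 1)"

definition conductor :: "'a::comm_ring_1 set \<Rightarrow> ('a \<Rightarrow> complex) \<Rightarrow> 'a set" where
  "conductor M \<chi> = (if trivial_char \<chi> then UNIV
     else (GREATEST I. is_ideal I \<and> I \<subseteq> M \<and> (\<forall>x\<in>I. \<chi> (1 + x) = 1)))"

definition primitive_char :: "'a::comm_ring_1 set \<Rightarrow> ('a \<Rightarrow> complex) \<Rightarrow> bool" where
  "primitive_char M \<chi> \<longleftrightarrow> conductor M \<chi> = {0}"

definition add_char :: "('a::comm_ring_1 \<Rightarrow> complex) \<Rightarrow> bool" where
  "add_char \<psi> \<longleftrightarrow> (\<forall>x y. \<psi> (x + y) = \<psi> x * \<psi> y) \<and> (\<forall>x. \<psi> x \<noteq> 0)"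

definition primitive_add_char :: "('a::comm_ring_1 \<Rightarrow> complex) \<Rightarrow> bool" where
  "primitive_add_char \<psi> \<longleftrightarrow>
     (\<forall>I. is_ideal I \<and> (\<forall>x\<in>I. \<psi> x = 1) \<longrightarrow> I = {0})"

definition gauss_sum :: "('a::comm_ring_1 \<Rightarrow> complex) \<Rightarrow> ('a \<Rightarrow> complex) \<Rightarrow> complex" where
  "gauss_sum \<psi> \<chi> = (\<Sum>u\<in>ring_units. \<psi> u * \<chi> u)"

definition jacobi_sum :: "('a::comm_ring_1 \<Rightarrow> complex) \<Rightarrow> ('a \<Rightarrow> complex) \<Rightarrow> complex" where
  "jacobi_sum \<chi> \<eta> = (\<Sum>(u, v)\<in>{(u, v). u \<in> ring_units \<and> v \<in> ring_units \<and> u + v = 1}. \<chi> u * \<eta> v)"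

definition char_mult :: "('a \<Rightarrow> complex) \<Rightarrow> ('a \<Rightarrow> complex) \<Rightarrow> ('a \<Rightarrow> complex)" where
  "char_mult \<chi> \<eta> = (\<lambda>u. \<chi> u * \<eta> u)"

end

theory Submission
  imports Defs
begin

text \<open>
  Everything rests on one device: a sum over a finite set vanishes if a permutation of the set
  multiplies every summand by the same constant \<open>c \<noteq> 1\<close>. A primitive character is nontrivial
  on \<open>1 + I\<close> for every nonzero ideal \<open>I \<subseteq> M\<close>, so its sum over \<open>1 + I\<close> vanishes.

  (i) If \<open>\<chi>\<close> is trivial on \<open>1 + I\<close> for a nonzero ideal \<open>I\<close>, averaging \<open>J(\<chi>,\<eta>)\<close> over the
  substitutions \<open>u \<mapsto> u(1 + x)\<close>, \<open>x \<in> I\<close>, reduces it to sums of \<open>\<eta>\<close> over \<open>1 + I\<close>. For trivial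
  \<open>\<chi>\<close>, \<open>J(\<chi>,\<eta>)\<close> is the sum of \<open>\<eta>\<close> over all units minus its sum over \<open>1 + M\<close>.

  (ii) If \<open>\<chi>\<eta>\<close> is trivial on \<open>1 + I\<close>, pick \<open>x \<in> I\<close> with \<open>\<chi>(1 + x) \<noteq> 1\<close>; the permutation
  \<open>u \<mapsto> u(1 + x)/(1 + ux)\<close> of \<open>{u. u, 1 - u units}\<close> scales the Jacobi summands by \<open>\<chi>(1 + x)\<close>.

  (iii) Substituting \<open>b = at\<close>, \<open>G(\<chi>)G(\<eta>) = \<Sum>\<^sub>t \<eta>(t) \<Sum>\<^sub>a \<chi>\<eta>(a) \<psi>(a(1 + t))\<close>. The inner sum is
  \<open>\<chi>\<eta>((1 + t)\<inverse>) G(\<chi>\<eta>)\<close> when \<open>1 + t\<close> is a unit, and vanishes when \<open>1 + t \<in> M\<close> because a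
  primitive character is nontrivial on the units fixing a given element of \<open>M\<close>. Substituting
  \<open>u = (1 + t)\<inverse>\<close> in the remaining sum gives \<open>J(\<chi>,\<eta>)\<close>.
\<close>

section \<open>Units and ideals\<close>

definition unit_inverse :: "'a::comm_ring_1 \<Rightarrow> 'a" where
  "unit_inverse u = (SOME w. u * w = 1)"

lemma ring_units_iff: "u \<in> ring_units \<longleftrightarrow> (\<exists>w. u * w = 1)"
  unfolding ring_units_def by (metis dvd_def mem_Collect_eq)

lemma unit_inverse_right: "u \<in> ring_units \<Longrightarrow> u * unit_inverse u = 1"
  unfolding unit_inverse_def ring_units_iff by (rule someI_ex)

lemma unit_inverse_left: "u \<in> ring_units \<Longrightarrow> unit_inverse u * u = 1"
  using unit_inverse_right by (simp add: mult.commute)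

lemma ring_units_one [simp]: "1 \<in> ring_units"
  by (simp add: ring_units_def)

lemma ring_units_uminus_iff [simp]: "- u \<in> ring_units \<longleftrightarrow> u \<in> ring_units"
  by (simp add: ring_units_def)

lemma ring_units_mult_iff [simp]: "u * v \<in> ring_units \<longleftrightarrow> u \<in> ring_units \<and> v \<in> ring_units"
  unfolding ring_units_def using mult_dvd_mono[of u 1 v 1] by (auto dest: dvd_mult_left dvd_mult_right)

lemma ring_units_unit_inverse: "u \<in> ring_units \<Longrightarrow> unit_inverse u \<in> ring_units"
  using unit_inverse_left ring_units_iff by blast

lemma unit_mult_cancel: "u \<in> ring_units \<Longrightarrow> u * x = u * y \<longleftrightarrow> x = y"
  by (metis mult.assoc mult_1 unit_inverse_left)

lemma unit_inverse_unique: "u * w = 1 \<Longrightarrow> unit_inverse u = w"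
  using unit_mult_cancel[of u] unit_inverse_right[of u] ring_units_iff by metis

lemma unit_inverse_unit_inverse: "u \<in> ring_units \<Longrightarrow> unit_inverse (unit_inverse u) = u"
  by (rule unit_inverse_unique) (rule unit_inverse_left)

lemma inj_on_mult_unit: "u \<in> ring_units \<Longrightarrow> inj_on ((*) u) A"
  by (simp add: inj_on_def unit_mult_cancel)

lemma is_ideal_zero: "is_ideal I \<Longrightarrow> 0 \<in> I"
  and is_ideal_add: "is_ideal I \<Longrightarrow> x \<in> I \<Longrightarrow> y \<in> I \<Longrightarrow> x + y \<in> I"
  and is_ideal_mult: "is_ideal I \<Longrightarrow> x \<in> I \<Longrightarrow> r * x \<in> I"
  unfolding is_ideal_def by auto

lemma is_ideal_uminus: "is_ideal I \<Longrightarrow> x \<in> I \<Longrightarrow> - x \<in> I"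
  using is_ideal_mult[of I x "- 1"] by simp

lemma is_ideal_diff: "is_ideal I \<Longrightarrow> x \<in> I \<Longrightarrow> y \<in> I \<Longrightarrow> x - y \<in> I"
  using is_ideal_add[of I x "- y"] is_ideal_uminus[of I y] by simp

lemma ex_maximal_ideal_superset:
  fixes I :: "'a::{comm_ring_1, finite} set"
  assumes "is_ideal I" "I \<noteq> UNIV"
  obtains J where "maximal_ideal J" "I \<subseteq> J"
proof -
  let ?S = "{J::'a set. is_ideal J \<and> J \<noteq> UNIV \<and> I \<subseteq> J}"
  have "\<exists>J. J \<in> ?S \<and> (\<forall>K. K \<in> ?S \<longrightarrow> card K \<le> card J)"
    by (rule ex_has_greatest_nat[where k = I and b = "Suc (card (UNIV :: 'a set))"])
      (use assms in \<open>auto simp: less_Suc_eq_le card_mono\<close>)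
  then obtain J where J: "J \<in> ?S" and J_max: "\<And>K. K \<in> ?S \<Longrightarrow> card K \<le> card J"
    by blast
  have "maximal_ideal J"
    unfolding maximal_ideal_def
  proof (intro conjI allI impI)
    fix K assume K: "is_ideal K \<and> J \<subseteq> K"
    show "K = J \<or> K = UNIV"
    proof (cases "K = UNIV")
      case False
      with K J have "card K \<le> card J" by (intro J_max) auto
      with K show ?thesis by (metis card_seteq finite)
    qed simp
  qed (use J in auto)
  with J that show ?thesis by blast
qed

section \<open>Character sums\<close>

lemma sum_eq_zero_if_bij_scales:
  fixes g :: "'a \<Rightarrow> 'b::field"
  assumes "bij_betw f A A" "\<And>a. a \<in> A \<Longrightarrow> g (f a) = c * g a" "c \<noteq> 1"
  shows "sum g A = 0"
proof -
  have "sum g A = sum (g \<circ> f) A"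
    using sum.reindex_bij_betw[OF assms(1), of g] by simp
  also have "\<dots> = c * sum g A"
    using assms(2) by (simp add: sum_distrib_left)
  finally show ?thesis
    using assms(3) by (metis mult_cancel_right2)
qed

lemma bij_betw_if_inj_on_endo:
  fixes f :: "'a::finite \<Rightarrow> 'a"
  shows "f ` A \<subseteq> A \<Longrightarrow> inj_on f A \<Longrightarrow> bij_betw f A A"
  by (simp add: bij_betw_def endo_inj_surj)

lemma bij_betw_mult_unit_units:
  fixes u :: "'a::{comm_ring_1, finite}"
  shows "u \<in> ring_units \<Longrightarrow> bij_betw ((*) u) ring_units ring_units"
  by (intro bij_betw_if_inj_on_endo inj_on_mult_unit) auto

lemma bij_betw_mult_unit_ideal:
  fixes u :: "'a::{comm_ring_1, finite}"
  shows "u \<in> ring_units \<Longrightarrow> is_ideal I \<Longrightarrow> bij_betw ((*) u) I I"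
  by (intro bij_betw_if_inj_on_endo inj_on_mult_unit) (auto intro: is_ideal_mult)

lemma mult_char_mult:
  "mult_char \<chi> \<Longrightarrow> u \<in> ring_units \<Longrightarrow> v \<in> ring_units \<Longrightarrow> \<chi> (u * v) = \<chi> u * \<chi> v"
  unfolding mult_char_def by blast

lemma mult_char_one: "mult_char \<chi> \<Longrightarrow> \<chi> 1 = 1"
  using mult_char_mult[of \<chi> 1 1] unfolding mult_char_def by force

lemma mult_char_unit_inverse: "mult_char \<chi> \<Longrightarrow> u \<in> ring_units \<Longrightarrow> \<chi> (unit_inverse u) * \<chi> u = 1"
  by (metis mult_char_mult mult_char_one ring_units_unit_inverse unit_inverse_left)

lemma mult_char_char_mult: "mult_char \<chi> \<Longrightarrow> mult_char \<eta> \<Longrightarrow> mult_char (char_mult \<chi> \<eta>)"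
  unfolding mult_char_def char_mult_def by auto

lemma sum_nontrivial_char_units:
  fixes \<eta> :: "'a::{comm_ring_1, finite} \<Rightarrow> complex"
  assumes "mult_char \<eta>" "\<not> trivial_char \<eta>"
  shows "(\<Sum>u\<in>ring_units. \<eta> u) = 0"
proof -
  obtain w where "w \<in> ring_units" "\<eta> w \<noteq> 1"
    using assms(2) unfolding trivial_char_def by blast
  then show ?thesis
    by (intro sum_eq_zero_if_bij_scales[OF bij_betw_mult_unit_units, of w _ "\<eta> w"])
      (auto simp: mult_char_mult[OF assms(1)])
qed

definition jacobi_units :: "'a::comm_ring_1 set" where
  "jacobi_units = {u \<in> ring_units. 1 - u \<in> ring_units}"

lemma jacobi_sum_eq: "jacobi_sum \<chi> \<eta> = (\<Sum>u\<in>jacobi_units. \<chi> u * \<eta> (1 - u))"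
  unfolding jacobi_sum_def jacobi_units_def
  by (rule sym, rule sum.reindex_bij_witness[where j = "\<lambda>u. (u, 1 - u)" and i = fst])
    (auto simp flip: eq_diff_eq)

definition jacobi_twist :: "'a::comm_ring_1 \<Rightarrow> 'a \<Rightarrow> 'a" where
  "jacobi_twist x u = u * (1 + x) * unit_inverse (1 + u * x)"

lemma sum_char_twisted_unit:
  fixes \<chi> :: "'a::{comm_ring_1, finite} \<Rightarrow> complex"
  assumes "mult_char \<chi>" "s \<in> ring_units"
  shows "(\<Sum>a\<in>ring_units. \<chi> a * \<psi> (a * s)) = \<chi> (unit_inverse s) * gauss_sum \<psi> \<chi>"
proof -
  have "gauss_sum \<psi> \<chi> = (\<Sum>a\<in>ring_units. \<psi> (s * a) * \<chi> (s * a))"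
    using sum.reindex_bij_betw[OF bij_betw_mult_unit_units[OF assms(2)], of "\<lambda>a. \<psi> a * \<chi> a"]
    by (simp add: gauss_sum_def)
  also have "\<dots> = \<chi> s * (\<Sum>a\<in>ring_units. \<chi> a * \<psi> (a * s))"
    using assms by (simp add: sum_distrib_left mult_char_mult mult_ac)
  finally show ?thesis
    using mult_char_unit_inverse[OF assms] by (metis mult.assoc mult_1)
qed

lemma gauss_sum_mult_gauss_sum:
  fixes \<chi> \<eta> :: "'a::{comm_ring_1, finite} \<Rightarrow> complex"
  assumes "mult_char \<chi>" "mult_char \<eta>" "add_char \<psi>"
  shows "gauss_sum \<psi> \<chi> * gauss_sum \<psi> \<eta> =
    (\<Sum>t\<in>ring_units. \<eta> t * (\<Sum>a\<in>ring_units. char_mult \<chi> \<eta> a * \<psi> (a * (1 + t))))"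
proof -
  have "gauss_sum \<psi> \<chi> * gauss_sum \<psi> \<eta> =
      (\<Sum>a\<in>ring_units. \<Sum>b\<in>ring_units. \<psi> a * \<chi> a * (\<psi> b * \<eta> b))"
    by (simp add: gauss_sum_def sum_product)
  also have "\<dots> = (\<Sum>a\<in>ring_units. \<Sum>t\<in>ring_units. \<psi> a * \<chi> a * (\<psi> (a * t) * \<eta> (a * t)))"
    by (intro sum.cong refl sum.reindex_bij_betw[symmetric] bij_betw_mult_unit_units)
  also have "\<dots> = (\<Sum>a\<in>ring_units. \<Sum>t\<in>ring_units. \<eta> t * (char_mult \<chi> \<eta> a * \<psi> (a * (1 + t))))"
    using assms unfolding add_char_def
    by (intro sum.cong refl) (simp add: mult_char_mult char_mult_def distrib_left mult_ac)
  finally show ?thesis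
    by (subst (asm) sum.swap) (simp add: sum_distrib_left)
qed

section \<open>Finite local rings\<close>

locale finite_local_ring =
  fixes M :: "'a::{comm_ring_1, finite} set"
  assumes local_ring: "local_ring TYPE('a)" and maximal_ideal_M: "maximal_ideal M"
begin

lemma is_ideal_M: "is_ideal M"
  using maximal_ideal_M unfolding maximal_ideal_def by blast

lemma one_not_in_M: "1 \<notin> M"
  using maximal_ideal_M is_ideal_mult[OF is_ideal_M, of 1] unfolding maximal_ideal_def by auto

lemma ring_units_iff_not_in_M: "u \<in> ring_units \<longleftrightarrow> u \<notin> M"
proof
  assume "u \<in> ring_units"
  then show "u \<notin> M"
    using is_ideal_mult[OF is_ideal_M, of u "unit_inverse u"] one_not_in_M unit_inverse_left by metis
next
  assume "u \<notin> M"
  show "u \<in> ring_units"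
  proof (rule ccontr)
    assume nonunit: "u \<notin> ring_units"
    let ?I = "range (\<lambda>r. r * u)"
    have "is_ideal ?I"
      unfolding is_ideal_def
    proof (intro conjI ballI allI)
      show "0 \<in> ?I"
        using rangeI[of "\<lambda>r. r * u" 0] by simp
    next
      fix x y assume "x \<in> ?I" "y \<in> ?I"
      then show "x + y \<in> ?I"
        by (auto simp: distrib_right[symmetric])
    next
      fix r x assume "x \<in> ?I"
      then show "r * x \<in> ?I"
        by (auto simp: mult.assoc[symmetric])
    qed
    moreover have "1 \<notin> ?I"
      using nonunit unfolding ring_units_iff by (auto simp: mult.commute)
    ultimately obtain J where "maximal_ideal J" "?I \<subseteq> J"
      by (metis UNIV_I ex_maximal_ideal_superset)
    moreover have "J = M"
      using \<open>maximal_ideal J\<close> maximal_ideal_M local_ring unfolding local_ring_def by blast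
    ultimately show False
      using \<open>u \<notin> M\<close> rangeI[of "\<lambda>r. r * u" 1] by auto
  qed
qed

lemma add_M_ring_units: "u \<in> ring_units \<Longrightarrow> m \<in> M \<Longrightarrow> u + m \<in> ring_units"
  using is_ideal_diff[OF is_ideal_M, of "u + m" m] by (auto simp: ring_units_iff_not_in_M)

lemma one_plus_M_ring_units: "m \<in> M \<Longrightarrow> 1 + m \<in> ring_units"
  by (simp add: add_M_ring_units)

lemma ring_is_field_iff: "ring_is_field TYPE('a) \<longleftrightarrow> M = {0}"
proof -
  have "x dvd 1 \<longleftrightarrow> x \<notin> M" for x :: 'a
    using ring_units_iff_not_in_M by (simp add: ring_units_def)
  then show ?thesis
    using is_ideal_zero[OF is_ideal_M] one_not_in_M unfolding ring_is_field_def by auto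
qed

lemma is_ideal_conductor_candidate:
  assumes "mult_char \<chi>"
  shows "is_ideal {x \<in> M. \<forall>r. \<chi> (1 + r * x) = 1}" (is "is_ideal ?K")
  unfolding is_ideal_def
proof (intro conjI ballI allI)
  show "0 \<in> ?K"
    using is_ideal_zero[OF is_ideal_M] mult_char_one[OF assms] by simp
next
  fix r x assume "x \<in> ?K"
  then show "r * x \<in> ?K"
    using is_ideal_mult[OF is_ideal_M] by (auto simp: mult.assoc[symmetric])
next
  fix x y assume x: "x \<in> ?K" and y: "y \<in> ?K"
  have "\<chi> (1 + r * (x + y)) = 1" for r
  proof -
    let ?a = "1 + r * x" and ?w = "unit_inverse (1 + r * x)"
    have a: "?a \<in> ring_units" "?a * ?w = 1"
      using x is_ideal_mult[OF is_ideal_M] one_plus_M_ring_units unit_inverse_right by auto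
    have "1 + r * (x + y) = ?a * (1 + (?w * r) * y)"
      using a(2) by (simp add: algebra_simps)
    moreover have "1 + (?w * r) * y \<in> ring_units"
      using y is_ideal_mult[OF is_ideal_M] one_plus_M_ring_units by auto
    ultimately show ?thesis
      using x y a(1) by (simp add: mult_char_mult[OF assms])
  qed
  then show "x + y \<in> ?K"
    using x y is_ideal_add[OF is_ideal_M] by auto
qed

lemma conductor_eq:
  assumes "mult_char \<chi>" "\<not> trivial_char \<chi>"
  shows "conductor M \<chi> = {x \<in> M. \<forall>r. \<chi> (1 + r * x) = 1}"
  unfolding conductor_def using assms(2)
proof (simp, intro Greatest_equality conjI)
  show "is_ideal {x \<in> M. \<forall>r. \<chi> (1 + r * x) = 1}"
    using is_ideal_conductor_candidate[OF assms(1)] .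
next
  fix I assume "is_ideal I \<and> I \<subseteq> M \<and> (\<forall>x\<in>I. \<chi> (1 + x) = 1)"
  then show "I \<le> {x \<in> M. \<forall>r. \<chi> (1 + r * x) = 1}"
    using is_ideal_mult by blast
qed (auto dest: spec[of _ 1])

lemma primitive_char_nontrivial: "primitive_char M \<chi> \<Longrightarrow> \<not> trivial_char \<chi>"
proof
  assume "primitive_char M \<chi>" "trivial_char \<chi>"
  then have "(UNIV :: 'a set) = {0}"
    by (simp add: primitive_char_def conductor_def)
  then have "(1 :: 'a) = 0"
    by blast
  then show False
    using one_not_in_M is_ideal_zero[OF is_ideal_M] by simp
qed

lemma primitive_char_witness:
  assumes "mult_char \<chi>" "primitive_char M \<chi>" "is_ideal I" "I \<subseteq> M" "I \<noteq> {0}"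
  obtains x where "x \<in> I" "\<chi> (1 + x) \<noteq> 1"
proof -
  have "I \<subseteq> conductor M \<chi>" if "\<forall>x\<in>I. \<chi> (1 + x) = 1"
    using that assms(4) is_ideal_mult[OF assms(3)]
    by (auto simp: conductor_eq[OF assms(1) primitive_char_nontrivial[OF assms(2)]])
  moreover have "\<not> I \<subseteq> conductor M \<chi>"
    using assms(2,5) is_ideal_zero[OF assms(3)] unfolding primitive_char_def by blast
  ultimately show ?thesis
    using that by blast
qed

lemma not_primitive_char_ideal:
  assumes "mult_char \<chi>" "\<not> trivial_char \<chi>" "\<not> primitive_char M \<chi>"
  obtains I where "is_ideal I" "I \<subseteq> M" "I \<noteq> {0}" "\<And>x. x \<in> I \<Longrightarrow> \<chi> (1 + x) = 1"
proof (rule that)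
  have conductor: "conductor M \<chi> = {x \<in> M. \<forall>r. \<chi> (1 + r * x) = 1}"
    using conductor_eq[OF assms(1,2)] .
  show "is_ideal (conductor M \<chi>)"
    unfolding conductor by (rule is_ideal_conductor_candidate[OF assms(1)])
  show "conductor M \<chi> \<subseteq> M" "\<And>x. x \<in> conductor M \<chi> \<Longrightarrow> \<chi> (1 + x) = 1"
    unfolding conductor by (auto dest: spec[of _ 1])
  show "conductor M \<chi> \<noteq> {0}"
    using assms(3) unfolding primitive_char_def .
qed

lemma sum_primitive_char_one_plus_ideal:
  assumes "mult_char \<eta>" "primitive_char M \<eta>" "is_ideal I" "I \<subseteq> M" "I \<noteq> {0}"
  shows "(\<Sum>y\<in>I. \<eta> (1 + y)) = 0"
proof -
  obtain x where x: "x \<in> I" "\<eta> (1 + x) \<noteq> 1"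
    using primitive_char_witness[OF assms] .
  have unit: "1 + x \<in> ring_units"
    using x(1) assms(4) one_plus_M_ring_units by blast
  let ?f = "\<lambda>y. x + (1 + x) * y"
  have "bij_betw ?f I I"
  proof (rule bij_betw_if_inj_on_endo)
    show "?f ` I \<subseteq> I"
      using x(1) is_ideal_add[OF assms(3)] is_ideal_mult[OF assms(3)] by blast
    show "inj_on ?f I"
      using inj_on_mult_unit[OF unit] by (simp add: inj_on_def)
  qed
  moreover have "\<eta> (1 + ?f y) = \<eta> (1 + x) * \<eta> (1 + y)" if "y \<in> I" for y
  proof -
    have "1 + ?f y = (1 + x) * (1 + y)"
      by (simp add: algebra_simps)
    then show ?thesis
      using that assms(4) unit one_plus_M_ring_units by (auto simp: mult_char_mult[OF assms(1)])
  qed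
  ultimately show ?thesis
    using x(2) by (rule sum_eq_zero_if_bij_scales[where g = "\<lambda>y. \<eta> (1 + y)"])
qed

lemma primitive_char_fixing_unit:
  assumes "mult_char \<chi>" "primitive_char M \<chi>" "n \<in> M"
  obtains w where "w \<in> ring_units" "w * n = n" "\<chi> w \<noteq> 1"
proof (cases "n = 0")
  case True
  then show ?thesis
    using that primitive_char_nontrivial[OF assms(2)] unfolding trivial_char_def by auto
next
  case False
  define I where "I = {r. r * n = 0}"
  have "is_ideal I"
    by (auto simp: I_def is_ideal_def algebra_simps)
  moreover have "I \<subseteq> M"
    using False unit_mult_cancel[of _ n 0] by (auto simp: I_def ring_units_iff_not_in_M)
  moreover have "I \<noteq> {0}"
  proof -
    \<comment> \<open>multiplication by the non-unit \<open>n\<close> is not surjective, hence not injective\<close>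
    have "\<not> inj ((*) n)"
      using finite_UNIV_inj_surj[of "(*) n"] assms(3) ring_units_iff_not_in_M ring_units_iff
      by (metis finite surjD)
    then obtain r s where "n * r = n * s" "r \<noteq> s"
      unfolding inj_def by blast
    then have "r - s \<in> I" "r - s \<noteq> 0"
      by (auto simp: I_def algebra_simps)
    then show ?thesis by blast
  qed
  ultimately obtain k where "k \<in> I" "\<chi> (1 + k) \<noteq> 1"
    using primitive_char_witness[OF assms(1,2)] by blast
  moreover have "(1 + k) * n = n"
    using \<open>k \<in> I\<close> by (simp add: I_def distrib_right)
  ultimately show ?thesis
    using that[of "1 + k"] \<open>I \<subseteq> M\<close> one_plus_M_ring_units by blast
qed

lemma sum_primitive_char_twisted_nonunit:
  assumes "mult_char \<chi>" "primitive_char M \<chi>" "n \<in> M"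
  shows "(\<Sum>a\<in>ring_units. \<chi> a * \<psi> (a * n)) = 0"
proof -
  obtain w where w: "w \<in> ring_units" "w * n = n" "\<chi> w \<noteq> 1"
    using primitive_char_fixing_unit[OF assms] .
  have "\<chi> (w * a) * \<psi> (w * a * n) = \<chi> w * (\<chi> a * \<psi> (a * n))" if "a \<in> ring_units" for a
  proof -
    have "w * a * n = a * n"
      using w(2) by (metis mult.assoc mult.commute)
    then show ?thesis
      using that w(1) by (simp add: mult_char_mult[OF assms(1)])
  qed
  then show ?thesis
    using w by (intro sum_eq_zero_if_bij_scales[OF bij_betw_mult_unit_units]) auto
qed

subsection \<open>Jacobi and Gauss sums\<close>

lemma bij_betw_jacobi_units_mult_one_plus:
  assumes "x \<in> M"
  shows "bij_betw (\<lambda>u. u * (1 + x)) jacobi_units jacobi_units"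
proof (rule bij_betw_if_inj_on_endo)
  have "1 - u * (1 + x) \<in> ring_units" if "1 - u \<in> ring_units" for u
    using add_M_ring_units[OF that is_ideal_uminus[OF is_ideal_M is_ideal_mult[OF is_ideal_M assms]]]
    by (simp add: algebra_simps)
  then show "(\<lambda>u. u * (1 + x)) ` jacobi_units \<subseteq> jacobi_units"
    using one_plus_M_ring_units[OF assms] by (auto simp: jacobi_units_def)
  show "inj_on (\<lambda>u. u * (1 + x)) jacobi_units"
    using inj_on_mult_unit[OF one_plus_M_ring_units[OF assms]] by (simp add: inj_on_def mult.commute)
qed

lemma jacobi_sum_imprimitive_primitive:
  assumes \<chi>: "mult_char \<chi>" "\<not> trivial_char \<chi>" "\<not> primitive_char M \<chi>"
    and \<eta>: "mult_char \<eta>" "primitive_char M \<eta>"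
  shows "jacobi_sum \<chi> \<eta> = 0"
proof -
  obtain I where I: "is_ideal I" "I \<subseteq> M" "I \<noteq> {0}" "\<And>x. x \<in> I \<Longrightarrow> \<chi> (1 + x) = 1"
    using not_primitive_char_ideal[OF \<chi>] by blast
  define F where "F u = \<chi> u * \<eta> (1 - u)" for u
  have shift: "sum F jacobi_units = (\<Sum>u\<in>jacobi_units. F (u * (1 + x)))" if "x \<in> I" for x
    using sum.reindex_bij_betw[OF bij_betw_jacobi_units_mult_one_plus, of x F] that I(2) by auto
  have fibre: "(\<Sum>x\<in>I. F (u * (1 + x))) = 0" if u: "u \<in> jacobi_units" for u
  proof -
    define v where "v = unit_inverse (1 - u)"
    define c where "c = - u * v"
    have units: "u \<in> ring_units" "1 - u \<in> ring_units" "c \<in> ring_units" "(1 - u) * v = 1"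
      using u ring_units_unit_inverse unit_inverse_right by (auto simp: jacobi_units_def c_def v_def)
    \<comment> \<open>\<open>1 - u (1 + x) = (1 - u) (1 + c x)\<close>, and \<open>\<chi>\<close> is trivial on \<open>1 + x\<close>\<close>
    have "F (u * (1 + x)) = F u * \<eta> (1 + c * x)" if "x \<in> I" for x
    proof -
      have "(1 - u) * (1 + c * x) = 1 - u - u * x * ((1 - u) * v)"
        by (simp add: c_def algebra_simps)
      also have "\<dots> = 1 - u * (1 + x)"
        unfolding units(4) by (simp add: algebra_simps)
      finally have "1 - u * (1 + x) = (1 - u) * (1 + c * x)" ..
      moreover have "x \<in> M" "c * x \<in> M"
        using that I(2) is_ideal_mult[OF is_ideal_M] by auto
      ultimately show ?thesis
        using that units one_plus_M_ring_units
        by (simp add: F_def I(4) mult_char_mult[OF \<chi>(1)] mult_char_mult[OF \<eta>(1)])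
    qed
    then have "(\<Sum>x\<in>I. F (u * (1 + x))) = F u * (\<Sum>x\<in>I. \<eta> (1 + c * x))"
      by (simp add: sum_distrib_left)
    also have "(\<Sum>x\<in>I. \<eta> (1 + c * x)) = (\<Sum>y\<in>I. \<eta> (1 + y))"
      using sum.reindex_bij_betw[OF bij_betw_mult_unit_ideal[OF units(3) I(1)], of "\<lambda>y. \<eta> (1 + y)"]
      by simp
    also have "\<dots> = 0"
      using sum_primitive_char_one_plus_ideal[OF \<eta> I(1-3)] .
    finally show ?thesis by simp
  qed
  have "of_nat (card I) * sum F jacobi_units = (\<Sum>x\<in>I. \<Sum>u\<in>jacobi_units. F (u * (1 + x)))"
    by (simp add: shift[symmetric] cong: sum.cong)
  also have "\<dots> = 0"
    using fibre by (subst sum.swap) simp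
  finally show ?thesis
    using I(3) is_ideal_zero[OF I(1)] by (auto simp: jacobi_sum_eq F_def)
qed

lemma jacobi_sum_trivial_primitive:
  assumes "trivial_char \<chi>" "mult_char \<eta>" "primitive_char M \<eta>" "M \<noteq> {0}"
  shows "jacobi_sum \<chi> \<eta> = 0"
proof -
  have "jacobi_sum \<chi> \<eta> = (\<Sum>u\<in>jacobi_units. \<eta> (1 - u))"
    using assms(1) by (simp add: jacobi_sum_eq trivial_char_def jacobi_units_def)
  also have "\<dots> = (\<Sum>v\<in>jacobi_units. \<eta> v)"
    by (rule sum.reindex_bij_witness[where i = "\<lambda>v. 1 - v" and j = "\<lambda>u. 1 - u"])
      (auto simp: jacobi_units_def)
  finally have J: "jacobi_sum \<chi> \<eta> = (\<Sum>v\<in>jacobi_units. \<eta> v)" .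
  have units: "ring_units = jacobi_units \<union> (\<lambda>m. 1 + m) ` M"
  proof (intro set_eqI iffI)
    fix v :: 'a
    assume "v \<in> ring_units"
    then show "v \<in> jacobi_units \<union> (\<lambda>m. 1 + m) ` M"
      using ring_units_iff_not_in_M[of "1 - v"] is_ideal_uminus[OF is_ideal_M, of "1 - v"]
      by (force simp: jacobi_units_def image_iff)
  qed (auto simp: jacobi_units_def one_plus_M_ring_units)
  have "jacobi_units \<inter> (\<lambda>m. 1 + m) ` M = {}"
    using is_ideal_uminus[OF is_ideal_M] by (force simp: jacobi_units_def ring_units_iff_not_in_M)
  then have "(\<Sum>v\<in>ring_units. \<eta> v) = (\<Sum>v\<in>jacobi_units. \<eta> v) + (\<Sum>m\<in>M. \<eta> (1 + m))"
    by (simp add: units sum.union_disjoint sum.reindex)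
  moreover have "(\<Sum>v\<in>ring_units. \<eta> v) = 0"
    using sum_nontrivial_char_units[OF assms(2) primitive_char_nontrivial[OF assms(3)]] .
  moreover have "(\<Sum>m\<in>M. \<eta> (1 + m)) = 0"
    using sum_primitive_char_one_plus_ideal[OF assms(2,3) is_ideal_M _ assms(4)] by simp
  ultimately show ?thesis
    using J by simp
qed

lemma one_minus_jacobi_twist:
  assumes "x \<in> M"
  shows "1 - jacobi_twist x u = (1 - u) * unit_inverse (1 + u * x)"
proof -
  have "(1 + u * x) * unit_inverse (1 + u * x) = 1"
    using assms is_ideal_mult[OF is_ideal_M] one_plus_M_ring_units unit_inverse_right by blast
  then have "1 - jacobi_twist x u =
      (1 + u * x) * unit_inverse (1 + u * x) - u * (1 + x) * unit_inverse (1 + u * x)"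
    by (simp add: jacobi_twist_def)
  also have "\<dots> = (1 - u) * unit_inverse (1 + u * x)"
    by (simp add: algebra_simps)
  finally show ?thesis .
qed

lemma bij_betw_jacobi_twist:
  assumes "x \<in> M"
  shows "bij_betw (jacobi_twist x) jacobi_units jacobi_units"
proof (rule bij_betw_if_inj_on_endo)
  have ux: "1 + u * x \<in> ring_units" "(1 + u * x) * unit_inverse (1 + u * x) = 1" for u
    using assms is_ideal_mult[OF is_ideal_M] one_plus_M_ring_units unit_inverse_right by blast+
  have x_unit: "1 + x \<in> ring_units"
    using assms one_plus_M_ring_units by blast
  have "jacobi_twist x u \<in> jacobi_units" if "u \<in> jacobi_units" for u
    using that x_unit ring_units_unit_inverse[OF ux(1)]
    unfolding jacobi_units_def mem_Collect_eq one_minus_jacobi_twist[OF assms]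
    by (simp add: jacobi_twist_def)
  then show "jacobi_twist x ` jacobi_units \<subseteq> jacobi_units"
    by blast
  have twist_times: "jacobi_twist x u * (1 + u * x) = u * (1 + x)" for u
    using ux(2)[of u] by (simp add: jacobi_twist_def mult_ac)
  show "inj_on (jacobi_twist x) jacobi_units"
  proof (rule inj_onI)
    fix u v assume "jacobi_twist x u = jacobi_twist x v"
    then have "jacobi_twist x u * (1 + u * x) * (1 + v * x) =
        jacobi_twist x v * (1 + v * x) * (1 + u * x)"
      by (simp add: mult_ac)
    then have "(1 + x) * (u * (1 + v * x)) = (1 + x) * (v * (1 + u * x))"
      by (simp add: twist_times mult_ac)
    then have "u * (1 + v * x) = v * (1 + u * x)"
      using unit_mult_cancel[OF x_unit] by blast
    then show "u = v"
      by (simp add: algebra_simps)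
  qed
qed

lemma jacobi_sum_primitive_imprimitive_product:
  assumes \<chi>: "mult_char \<chi>" "primitive_char M \<chi>" and \<eta>: "mult_char \<eta>"
    and \<chi>\<eta>: "\<not> trivial_char (char_mult \<chi> \<eta>)" "\<not> primitive_char M (char_mult \<chi> \<eta>)"
  shows "jacobi_sum \<chi> \<eta> = 0"
proof -
  obtain I where I: "is_ideal I" "I \<subseteq> M" "I \<noteq> {0}" "\<And>y. y \<in> I \<Longrightarrow> char_mult \<chi> \<eta> (1 + y) = 1"
    using not_primitive_char_ideal[OF mult_char_char_mult[OF \<chi>(1) \<eta>] \<chi>\<eta>] by blast
  obtain x where x: "x \<in> I" "\<chi> (1 + x) \<noteq> 1"
    using primitive_char_witness[OF \<chi> I(1-3)] .
  have xM: "x \<in> M"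
    using x(1) I(2) by blast
  define F where "F u = \<chi> u * \<eta> (1 - u)" for u
  have "F (jacobi_twist x u) = \<chi> (1 + x) * F u" if "u \<in> jacobi_units" for u
  proof -
    let ?w = "unit_inverse (1 + u * x)"
    have units: "u \<in> ring_units" "1 - u \<in> ring_units" "1 + x \<in> ring_units"
      "1 + u * x \<in> ring_units" "?w \<in> ring_units"
      using that xM is_ideal_mult[OF I(1) x(1)] I(2) one_plus_M_ring_units ring_units_unit_inverse
      by (auto simp: jacobi_units_def)
    \<comment> \<open>\<open>\<chi>\<eta>\<close> is trivial on \<open>1 + u x\<close>, hence on its inverse\<close>
    have "\<chi> ?w * \<eta> ?w = 1"
      using mult_char_unit_inverse[OF mult_char_char_mult[OF \<chi>(1) \<eta>] units(4)]
        I(4)[OF is_ideal_mult[OF I(1) x(1)]]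
      by (simp add: char_mult_def)
    moreover have "F (jacobi_twist x u) = \<chi> (1 + x) * F u * (\<chi> ?w * \<eta> ?w)"
      using units unfolding F_def one_minus_jacobi_twist[OF xM]
      by (simp add: jacobi_twist_def mult_char_mult[OF \<chi>(1)] mult_char_mult[OF \<eta>])
    ultimately show ?thesis
      by simp
  qed
  then have "sum F jacobi_units = 0"
    using x(2) by (intro sum_eq_zero_if_bij_scales[OF bij_betw_jacobi_twist[OF xM]])
  then show ?thesis
    by (simp add: jacobi_sum_eq F_def)
qed

lemma gauss_sum_mult_eq_jacobi_sum:
  assumes "mult_char \<chi>" "mult_char \<eta>" "add_char \<psi>" "primitive_char M (char_mult \<chi> \<eta>)"
  shows "gauss_sum \<psi> \<chi> * gauss_sum \<psi> \<eta> = jacobi_sum \<chi> \<eta> * gauss_sum \<psi> (char_mult \<chi> \<eta>)"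
proof -
  let ?G = "gauss_sum \<psi> (char_mult \<chi> \<eta>)"
  let ?S = "\<lambda>s. \<Sum>a\<in>ring_units. char_mult \<chi> \<eta> a * \<psi> (a * s)"
  have \<chi>\<eta>: "mult_char (char_mult \<chi> \<eta>)"
    using mult_char_char_mult[OF assms(1,2)] .
  define T :: "'a set" where "T = {t \<in> ring_units. 1 + t \<in> ring_units}"
  have "(\<Sum>t\<in>ring_units. \<eta> t * ?S (1 + t)) = (\<Sum>t\<in>T. \<eta> t * ?S (1 + t))"
    using sum_primitive_char_twisted_nonunit[OF \<chi>\<eta> assms(4)]
    by (intro sum.mono_neutral_right) (auto simp: T_def ring_units_iff_not_in_M)
  also have "\<dots> = (\<Sum>t\<in>T. \<eta> t * char_mult \<chi> \<eta> (unit_inverse (1 + t))) * ?G"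
    by (simp add: sum_distrib_right sum_char_twisted_unit[OF \<chi>\<eta>] T_def mult.assoc)
  also have "(\<Sum>t\<in>T. \<eta> t * char_mult \<chi> \<eta> (unit_inverse (1 + t))) = jacobi_sum \<chi> \<eta>"
    unfolding jacobi_sum_eq
  proof (rule sum.reindex_bij_witness[where j = "\<lambda>t. unit_inverse (1 + t)"
        and i = "\<lambda>u :: 'a. (1 - u) * unit_inverse u"])
    fix t assume "t \<in> T"
    then have t: "t \<in> ring_units" "1 + t \<in> ring_units" "(1 + t) * unit_inverse (1 + t) = 1"
      using unit_inverse_right by (auto simp: T_def)
    then have one_minus: "1 - unit_inverse (1 + t) = t * unit_inverse (1 + t)"
      by (simp add: algebra_simps)
    show "(1 - unit_inverse (1 + t)) * unit_inverse (unit_inverse (1 + t)) = t"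
      using t by (simp add: one_minus unit_inverse_unit_inverse) (metis mult.left_commute mult_1_right)
    show "unit_inverse (1 + t) \<in> jacobi_units"
      using t ring_units_unit_inverse by (simp add: jacobi_units_def one_minus)
    show "\<chi> (unit_inverse (1 + t)) * \<eta> (1 - unit_inverse (1 + t)) =
        \<eta> t * char_mult \<chi> \<eta> (unit_inverse (1 + t))"
      using mult_char_mult[OF assms(2) t(1) ring_units_unit_inverse[OF t(2)]]
      by (simp add: one_minus char_mult_def mult_ac)
  next
    fix u :: 'a assume "u \<in> jacobi_units"
    then have u: "u \<in> ring_units" "1 - u \<in> ring_units" "u * unit_inverse u = 1"
      using unit_inverse_right by (auto simp: jacobi_units_def)
    then have one_plus: "1 + (1 - u) * unit_inverse u = unit_inverse u"
      by (simp add: algebra_simps)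
    show "unit_inverse (1 + (1 - u) * unit_inverse u) = u"
      using u by (simp add: one_plus unit_inverse_unit_inverse)
    show "(1 - u) * unit_inverse u \<in> T"
      using u ring_units_unit_inverse by (simp add: T_def one_plus)
  qed
  finally show ?thesis
    using gauss_sum_mult_gauss_sum[OF assms(1-3)] by (simp add: mult.commute)
qed

end

theorem mainTheorem17:
  fixes M :: "'a::{comm_ring_1, finite} set"
    and \<chi> \<eta> :: "'a \<Rightarrow> complex"
  assumes "local_ring TYPE('a)"
    and "maximal_ideal M"
    and "mult_char \<chi>" and "mult_char \<eta>"
  shows "(primitive_char M \<eta> \<longrightarrow>
            ((\<not> trivial_char \<chi> \<and> \<not> primitive_char M \<chi> \<longrightarrow> jacobi_sum \<chi> \<eta> = 0) \<and>
             (trivial_char \<chi> \<and> \<not> ring_is_field TYPE('a) \<longrightarrow> jacobi_sum \<chi> \<eta> = 0)))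
       \<and> (primitive_char M \<chi> \<and> primitive_char M \<eta> \<and> \<not> ring_is_field TYPE('a) \<and>
          \<not> trivial_char (char_mult \<chi> \<eta>) \<and> \<not> primitive_char M (char_mult \<chi> \<eta>)
            \<longrightarrow> jacobi_sum \<chi> \<eta> = 0)
       \<and> (\<forall>\<psi>. add_char \<psi> \<and> primitive_add_char \<psi> \<and> primitive_char M (char_mult \<chi> \<eta>)
            \<longrightarrow> gauss_sum \<psi> \<chi> * gauss_sum \<psi> \<eta> =
                jacobi_sum \<chi> \<eta> * gauss_sum \<psi> (char_mult \<chi> \<eta>))"
proof -
  interpret finite_local_ring M
    using assms(1,2) by unfold_locales
  show ?thesis
    using jacobi_sum_imprimitive_primitive[OF assms(3) _ _ assms(4)]
      jacobi_sum_trivial_primitive[OF _ assms(4)] ring_is_field_iff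
      jacobi_sum_primitive_imprimitive_product[OF assms(3) _ assms(4)]
      gauss_sum_mult_eq_jacobi_sum[OF assms(3,4)]
    by blast
qed

end
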